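(* Let $\nu=(\nu_x,\nu_y,\nu_t)\in\mathbb{S}^{2n}$ with $\nu_t=0$, let $d\in\mathbb{R}$ and $\Pi^+_{\nu,d}=\{\xi\in\mathbb{R}^{2n+1}:\langle\xi,\nu\rangle>d\}$. Then for every $u\in C_0^\infty(\Pi^+_{\nu,d})$, \[ \int_{\Pi^+_{\nu,d}}|\nabla_{\mathbb{H}^n}u|^2\,d\xi\ge\frac14\int_{\Pi^+_{\nu,d}}\frac{|u|^2}{\operatorname{dist}(\xi,\partial\Pi^+_{\nu,d})^2}\,d\xi . \]
   Context: $\mathbb{H}^n$ is $\mathbb{R}^{2n+1}$ with points $\xi=(x,y,t)$, $x,y\in\mathbb{R}^n$, $t\in\mathbb{R}$; correspondingly $\nu=(\nu_x,\nu_y,\nu_t)$ with $\nu_x,\nu_y\in\mathbb{R}^n$, $\nu_t\in\mathbb{R}$. For $1\le i\le n$, $X_i=\partial_{x_i}+2y_i\partial_t$, $Y_i=\partial_{y_i}-2x_i\partial_t$; $\nabla_{\mathbb{H}^n}u=(X_1u,\dots,X_nu,Y_1u,\dots,Y_nu)$ and $|\nabla_{\mathbb{H}^n}u|^2=\sum_i(|X_iu|^2+|Y_iu|^2)$. $\langle\cdot,\cdot\rangle$ is the Euclidean inner product, $\mathbb{S}^{2n}$ the Euclidean unit sphere in $\mathbb{R}^{2n+1}$, $\operatorname{dist}$ the Euclidean distance. Functions are real-valued. *)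

theory Defs
  imports "HOL-Analysis.Analysis"
begin

type_synonym 'n heis = "(real^'n) \<times> (real^'n) \<times> real"

coinductive smooth_on :: "'a::euclidean_space set \<Rightarrow> ('a \<Rightarrow> real) \<Rightarrow> bool" where
  "\<lbrakk> f differentiable_on S;
     \<forall>v. smooth_on S (\<lambda>x. frechet_derivative f (at x) v) \<rbrakk> \<Longrightarrow> smooth_on S f"

text \<open>C_0^infinity(U): smooth functions (here extended by zero to the whole space) whose
  support is a compact subset of the open set U.\<close>
definition C0_infty :: "'a::euclidean_space set \<Rightarrow> ('a \<Rightarrow> real) set" where
  "C0_infty U = {u. smooth_on UNIV u \<and> compact (closure {x. u x \<noteq> 0})
                   \<and> closure {x. u x \<noteq> 0} \<subseteq> U}"

definition heisX :: "'n::finite \<Rightarrow> ('n heis \<Rightarrow> real) \<Rightarrow> 'n heis \<Rightarrow> real" where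
  "heisX i u \<xi> = (case \<xi> of (x, y, t) \<Rightarrow>
     frechet_derivative u (at \<xi>) (axis i 1, 0, 0)
     + 2 * (y $ i) * frechet_derivative u (at \<xi>) (0, 0, 1))"

definition heisY :: "'n::finite \<Rightarrow> ('n heis \<Rightarrow> real) \<Rightarrow> 'n heis \<Rightarrow> real" where
  "heisY i u \<xi> = (case \<xi> of (x, y, t) \<Rightarrow>
     frechet_derivative u (at \<xi>) (0, axis i 1, 0)
     - 2 * (x $ i) * frechet_derivative u (at \<xi>) (0, 0, 1))"

definition heis_grad_sq :: "('n::finite heis \<Rightarrow> real) \<Rightarrow> 'n heis \<Rightarrow> real" where
  "heis_grad_sq u \<xi> = (\<Sum>i\<in>UNIV. (heisX i u \<xi>)\<^sup>2 + (heisY i u \<xi>)\<^sup>2)"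

definition halfspace_plus :: "'n::finite heis \<Rightarrow> real \<Rightarrow> 'n heis set" where
  "halfspace_plus \<nu> d = {\<xi>. \<xi> \<bullet> \<nu> > d}"

end

theory Submission
  imports Defs
begin

text \<open>Write \<open>\<nu> = (a, b, 0)\<close> and \<open>W = \<Sum>\<^sub>i a\<^sub>i X\<^sub>i + b\<^sub>i Y\<^sub>i\<close>. The straight-line flow
  \<open>\<xi> \<mapsto> \<xi> + s W(\<xi>)\<close> preserves Lebesgue measure (it is a shear in \<open>t\<close> followed by a translation),
  \<open>W\<close> is constant along its own flow lines, and \<open>\<delta>(\<xi>) = \<langle>\<xi>, \<nu>\<rangle> - d\<close> grows with unit speed along them.
  Integrating the derivative of \<open>u\<^sup>2/\<delta>\<close> along the flow therefore gives
  \<open>\<integral> (u/\<delta>)\<^sup>2 = 2 \<integral> (u/\<delta>) Wu \<le> \<integral> (u/\<delta>)\<^sup>2/2 + 2 \<integral> (Wu)\<^sup>2\<close>, i.e. \<open>\<integral> (u/\<delta>)\<^sup>2 \<le> 4 \<integral> (Wu)\<^sup>2\<close>;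
  and \<open>(Wu)\<^sup>2 \<le> |\<nabla>\<^sub>H u|\<^sup>2\<close> by Cauchy-Schwarz because \<open>|(a, b)| = 1\<close>. On the half-space the distance to
  the boundary is exactly \<open>\<delta>\<close>.\<close>

section \<open>Lebesgue measure and compactly supported functions\<close>

lemma lborel_distr_fibrewise:
  fixes F :: "'a::euclidean_space \<Rightarrow> 'b::euclidean_space \<Rightarrow> 'b"
  assumes F[measurable]: "(\<lambda>p. (fst p, F (fst p) (snd p))) \<in> borel_measurable borel"
    and fibre: "\<And>x. distr lborel borel (F x) = lborel"
  shows "distr lborel borel (\<lambda>p. (fst p, F (fst p) (snd p))) = lborel"
proof (rule measure_eqI)
  fix A assume "A \<in> sets (distr lborel borel (\<lambda>p. (fst p, F (fst p) (snd p))))"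
  then have A[measurable]: "A \<in> sets borel" by simp
  have Fx: "F x \<in> borel_measurable borel" for x
  proof -
    have "(\<lambda>y::'b. (x, y)) \<in> borel_measurable borel"
      by (intro borel_measurable_continuous_onI continuous_intros)
    from measurable_compose[OF this F] have "(\<lambda>y. (x, F x y)) \<in> borel_measurable borel" by simp
    moreover have "snd \<in> borel_measurable (borel :: ('a \<times> 'b) measure)"
      by (intro borel_measurable_continuous_onI continuous_intros)
    ultimately have "(\<lambda>y. snd (x, F x y)) \<in> borel_measurable borel" by (rule measurable_compose)
    then show ?thesis by simp
  qed
  have fibre_A: "(\<integral>\<^sup>+y. indicator A (x, F x y) \<partial>lborel) = (\<integral>\<^sup>+y. indicator A (x, y) \<partial>lborel)" for x
  proof -
    have "(\<integral>\<^sup>+y. indicator A (x, F x y) \<partial>lborel) = (\<integral>\<^sup>+y. indicator A (x, y) \<partial>distr lborel borel (F x))"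
      using Fx by (intro nn_integral_distr[symmetric]) auto
    then show ?thesis by (simp add: fibre)
  qed
  have "sets (lborel \<Otimes>\<^sub>M lborel) = sets (borel :: ('a \<times> 'b) measure)"
    by (metis lborel_prod sets_lborel)
  note on_product = measurable_cong_sets[OF this refl]
  have "(\<lambda>p. indicator A (fst p, F (fst p) (snd p)) :: ennreal) \<in> borel_measurable (lborel \<Otimes>\<^sub>M lborel)"
    "(indicator A :: _ \<Rightarrow> ennreal) \<in> borel_measurable (lborel \<Otimes>\<^sub>M lborel)"
    unfolding on_product by measurable
  note iterated = this[THEN lborel.nn_integral_fst]
  have "emeasure (distr lborel borel (\<lambda>p. (fst p, F (fst p) (snd p)))) A
      = (\<integral>\<^sup>+p. indicator A p \<partial>distr lborel borel (\<lambda>p. (fst p, F (fst p) (snd p))))"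
    by simp
  also have "\<dots> = (\<integral>\<^sup>+p. indicator A (fst p, F (fst p) (snd p)) \<partial>(lborel \<Otimes>\<^sub>M lborel))"
    by (subst nn_integral_distr) (simp_all add: lborel_prod)
  also have "\<dots> = (\<integral>\<^sup>+x. \<integral>\<^sup>+y. indicator A (x, F x y) \<partial>lborel \<partial>lborel)"
    by (simp add: iterated(1)[symmetric])
  also have "\<dots> = (\<integral>\<^sup>+x. \<integral>\<^sup>+y. indicator A (x, y) \<partial>lborel \<partial>lborel)"
    by (simp add: fibre_A)
  also have "\<dots> = (\<integral>\<^sup>+p. indicator A p \<partial>(lborel \<Otimes>\<^sub>M lborel))"
    by (rule iterated(2))
  also have "\<dots> = emeasure lborel A"
    by (simp add: lborel_prod)
  finally show "emeasure (distr lborel borel (\<lambda>p. (fst p, F (fst p) (snd p)))) A = emeasure lborel A" .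
qed simp

lemma lborel_distr_shear:
  fixes c :: "'a::euclidean_space \<Rightarrow> 'b::euclidean_space"
  assumes "continuous_on UNIV c"
  shows "distr lborel borel (\<lambda>p. (fst p, snd p + c (fst p))) = lborel"
proof -
  have "distr lborel borel (\<lambda>p. (fst p, (\<lambda>x y. y + c x) (fst p) (snd p))) = lborel"
  proof (rule lborel_distr_fibrewise)
    show "(\<lambda>p. (fst p, (\<lambda>x y. y + c x) (fst p) (snd p))) \<in> borel_measurable borel"
      by (intro borel_measurable_continuous_onI continuous_intros continuous_on_compose2[OF assms]) auto
    show "distr lborel borel ((\<lambda>x y. y + c x) x) = lborel" for x
      by (subst add.commute) (rule lborel_distr_plus)
  qed
  then show ?thesis by simp
qed

lemma continuous_on_vanishing_outside:
  fixes h :: "'a::topological_space \<Rightarrow> real"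
  assumes "open H" "K \<subseteq> H" "closed K" "continuous_on H h" "\<And>x. x \<notin> K \<Longrightarrow> h x = 0"
  shows "continuous_on UNIV h"
proof -
  have "continuous_on (-K) h"
    using continuous_on_const[of "-K" 0] by (rule continuous_on_cong[THEN iffD1, rotated 2]) (use assms in auto)
  then have "continuous_on (H \<union> -K) h"
    using assms by (intro continuous_on_open_Un) auto
  moreover have "H \<union> -K = UNIV" using assms by auto
  ultimately show ?thesis by simp
qed

lemma integrable_lborel_compact_support:
  fixes h :: "'a::euclidean_space \<Rightarrow> real"
  assumes "continuous_on UNIV h" "compact K" "\<And>x. x \<notin> K \<Longrightarrow> h x = 0"
  shows "integrable lborel h"
proof -
  have "integrable lborel (\<lambda>x. indicator K x *\<^sub>R h x)"
    by (rule borel_integrable_compact[OF assms(2) continuous_on_subset[OF assms(1)]]) auto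
  also have "(\<lambda>x. indicator K x *\<^sub>R h x) = h"
    using assms(3) by (auto simp: fun_eq_iff indicator_def)
  finally show ?thesis .
qed

lemma has_derivative_vanishing_outside:
  assumes "closed K" "\<And>x. x \<notin> K \<Longrightarrow> u x = 0" "(u has_derivative D) (at x)" "x \<notin> K"
  shows "D = (\<lambda>_. 0)"
proof -
  have "(u has_derivative (\<lambda>_. 0)) (at x)"
    by (rule has_derivative_transform_within_open[OF has_derivative_const[of 0 "at x"], of "-K"])
      (use assms in auto)
  with assms(3) show ?thesis by (rule has_derivative_unique)
qed

lemma set_lebesgue_integral_eq_integral:
  fixes f g :: "'a \<Rightarrow> real"
  assumes "\<And>x. x \<in> A \<Longrightarrow> f x = g x" "\<And>x. x \<notin> A \<Longrightarrow> g x = 0"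
  shows "(LINT x:A|M. f x) = integral\<^sup>L M g"
  unfolding set_lebesgue_integral_def
  by (rule Bochner_Integration.integral_cong) (use assms in \<open>auto simp: indicator_def\<close>)

lemma infdist_hyperplane:
  fixes \<nu> \<xi> :: "'a::euclidean_space"
  assumes "norm \<nu> = 1"
  shows "infdist \<xi> {x. \<nu> \<bullet> x = d} = \<bar>\<xi> \<bullet> \<nu> - d\<bar>"
proof (rule antisym)
  define x0 where "x0 = \<xi> - (\<xi> \<bullet> \<nu> - d) *\<^sub>R \<nu>"
  have "\<nu> \<bullet> \<nu> = 1"
    using assms by (simp add: norm_eq_sqrt_inner)
  then have "\<nu> \<bullet> x0 = d"
    unfolding x0_def by (simp add: inner_diff_right inner_commute)
  then have "infdist \<xi> {x. \<nu> \<bullet> x = d} \<le> dist \<xi> x0"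
    by (intro infdist_le) auto
  also have "\<dots> = \<bar>\<xi> \<bullet> \<nu> - d\<bar>"
    unfolding x0_def dist_norm using assms by simp
  finally show "infdist \<xi> {x. \<nu> \<bullet> x = d} \<le> \<bar>\<xi> \<bullet> \<nu> - d\<bar>" .
  have ne: "{x. \<nu> \<bullet> x = d} \<noteq> {}"
    using \<open>\<nu> \<bullet> x0 = d\<close> by auto
  show "\<bar>\<xi> \<bullet> \<nu> - d\<bar> \<le> infdist \<xi> {x. \<nu> \<bullet> x = d}"
    unfolding infdist_notempty[OF ne]
  proof (rule cINF_greatest[OF ne])
    fix x assume "x \<in> {x. \<nu> \<bullet> x = d}"
    then have "\<xi> \<bullet> \<nu> - d = (\<xi> - x) \<bullet> \<nu>"
      using inner_diff_left[of \<xi> x \<nu>] inner_commute[of x \<nu>] by simp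
    also have "\<bar>\<dots>\<bar> \<le> norm (\<xi> - x) * norm \<nu>"
      by (rule Cauchy_Schwarz_ineq2)
    finally show "\<bar>\<xi> \<bullet> \<nu> - d\<bar> \<le> dist \<xi> x"
      using assms by (simp add: dist_norm)
  qed
qed

section \<open>Hardy's inequality along a measure-preserving flow\<close>

text \<open>The indicator is that of the set of points carried into \<open>K\<close> by the flow within time \<open>1\<close>.\<close>
lemma difference_quotient_along_flow_bound:
  fixes f g :: "'a::real_normed_vector \<Rightarrow> real" and w :: "'a \<Rightarrow> 'a"
  assumes winv: "\<And>\<xi> r. w (\<xi> + r *\<^sub>R w \<xi>) = w \<xi>"
    and der: "\<And>\<xi> r. ((\<lambda>r. f (\<xi> + r *\<^sub>R w \<xi>)) has_real_derivative g (\<xi> + r *\<^sub>R w \<xi>)) (at r)"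
    and g_bound: "\<And>\<xi>. \<bar>g \<xi>\<bar> \<le> C"
    and f0: "\<And>\<xi>. \<xi> \<notin> K \<Longrightarrow> f \<xi> = 0"
    and h: "0 < h" "h \<le> 1"
  shows "\<bar>(f (\<xi> + h *\<^sub>R w \<xi>) - f \<xi>) / h\<bar>
    \<le> indicator ((\<lambda>p. snd p - fst p *\<^sub>R w (snd p)) ` ({0..1} \<times> K)) \<xi> * C"
proof (cases "\<xi> \<in> (\<lambda>p. snd p - fst p *\<^sub>R w (snd p)) ` ({0..1} \<times> K)")
  case True
  obtain z where "f (\<xi> + h *\<^sub>R w \<xi>) - f (\<xi> + 0 *\<^sub>R w \<xi>) = (h - 0) * g (\<xi> + z *\<^sub>R w \<xi>)"
    using MVT2[OF h(1), of "\<lambda>r. f (\<xi> + r *\<^sub>R w \<xi>)" "\<lambda>r. g (\<xi> + r *\<^sub>R w \<xi>)"] der by blast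
  then have "(f (\<xi> + h *\<^sub>R w \<xi>) - f \<xi>) / h = g (\<xi> + z *\<^sub>R w \<xi>)"
    using h by simp
  then show ?thesis using True g_bound by simp
next
  case False
  have "\<xi> \<notin> K"
    using False by (auto intro!: image_eqI[where x="(0, \<xi>)"])
  moreover have "\<xi> + h *\<^sub>R w \<xi> \<notin> K"
  proof
    assume "\<xi> + h *\<^sub>R w \<xi> \<in> K"
    then have "(\<xi> + h *\<^sub>R w \<xi>) - h *\<^sub>R w (\<xi> + h *\<^sub>R w \<xi>)
        \<in> (\<lambda>p. snd p - fst p *\<^sub>R w (snd p)) ` ({0..1} \<times> K)"
      using h by (intro image_eqI[where x="(h, \<xi> + h *\<^sub>R w \<xi>)"]) auto
    with False show False by (simp add: winv)
  qed
  ultimately show ?thesis using f0 False by simp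
qed

lemma filterlim_inverse_Suc_at_0: "filterlim (\<lambda>k. 1 / real (Suc k)) (at 0) sequentially"
proof -
  have "(\<lambda>k. 1 / real (Suc k)) \<longlonglongrightarrow> 0"
    using LIMSEQ_inverse_real_of_nat by (simp add: inverse_eq_divide)
  moreover have "\<forall>\<^sub>F k in sequentially. 1 / real (Suc k) \<noteq> 0"
    by simp
  ultimately show ?thesis
    unfolding filterlim_at by auto
qed

lemma integral_difference_quotient_along_flow:
  fixes f :: "'a::euclidean_space \<Rightarrow> real" and w :: "'a \<Rightarrow> 'a"
  assumes flow: "distr lborel borel (\<lambda>\<xi>. \<xi> + s *\<^sub>R w \<xi>) = lborel"
    and "(\<lambda>\<xi>. \<xi> + s *\<^sub>R w \<xi>) \<in> borel_measurable borel"
    and f: "integrable lborel f"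
  shows "integral\<^sup>L lborel (\<lambda>\<xi>. (f (\<xi> + s *\<^sub>R w \<xi>) - f \<xi>) / s) = 0"
proof -
  have "f \<in> borel_measurable borel"
    using f by simp
  then have "integral\<^sup>L lborel (\<lambda>\<xi>. f (\<xi> + s *\<^sub>R w \<xi>)) = integral\<^sup>L lborel f"
    and "integrable lborel (\<lambda>\<xi>. f (\<xi> + s *\<^sub>R w \<xi>))"
    using integral_distr[of "\<lambda>\<xi>. \<xi> + s *\<^sub>R w \<xi>" lborel borel f]
      integrable_distr_eq[of "\<lambda>\<xi>. \<xi> + s *\<^sub>R w \<xi>" lborel borel f] assms
    by simp_all
  with f show ?thesis
    by simp
qed

lemma integral_derivative_along_flow_eq_0:
  fixes f g :: "'a::euclidean_space \<Rightarrow> real" and w :: "'a \<Rightarrow> 'a"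
  assumes flow: "\<And>s. distr lborel borel (\<lambda>\<xi>. \<xi> + s *\<^sub>R w \<xi>) = lborel"
    and wc: "continuous_on UNIV w"
    and winv: "\<And>\<xi> r. w (\<xi> + r *\<^sub>R w \<xi>) = w \<xi>"
    and fc: "continuous_on UNIV f" and gc: "continuous_on UNIV g"
    and K: "compact K" and f0: "\<And>\<xi>. \<xi> \<notin> K \<Longrightarrow> f \<xi> = 0" and g0: "\<And>\<xi>. \<xi> \<notin> K \<Longrightarrow> g \<xi> = 0"
    and der: "\<And>\<xi> r. ((\<lambda>r. f (\<xi> + r *\<^sub>R w \<xi>)) has_real_derivative g (\<xi> + r *\<^sub>R w \<xi>)) (at r)"
  shows "integral\<^sup>L lborel g = 0"
proof -
  obtain C where "\<And>\<xi>. \<xi> \<in> K \<Longrightarrow> \<bar>g \<xi>\<bar> \<le> C"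
    using compact_imp_bounded[OF compact_continuous_image[OF continuous_on_subset[OF gc] K]]
    unfolding bounded_iff by auto
  with g0 have g_bound: "\<bar>g \<xi>\<bar> \<le> max C 0" for \<xi>
    by (cases "\<xi> \<in> K") force+
  define K' where "K' = (\<lambda>p. snd p - fst p *\<^sub>R w (snd p)) ` ({0..1::real} \<times> K)"
  have "compact K'" unfolding K'_def
    by (intro compact_continuous_image compact_Times K compact_Icc continuous_intros
        continuous_on_compose2[OF wc]) auto
  have [measurable]: "f \<in> borel_measurable borel" "g \<in> borel_measurable borel"
    using fc gc by (simp_all add: borel_measurable_continuous_onI)
  have [measurable]: "(\<lambda>\<xi>. \<xi> + s *\<^sub>R w \<xi>) \<in> borel_measurable borel" for s
    by (intro borel_measurable_continuous_onI continuous_intros wc)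
  define h :: "nat \<Rightarrow> real" where "h k = 1 / real (Suc k)" for k
  have h: "0 < h k" "h k \<le> 1" for k
    by (auto simp: h_def)
  define q where "q k \<xi> = (f (\<xi> + h k *\<^sub>R w \<xi>) - f \<xi>) / h k" for k \<xi>
  have q0: "integral\<^sup>L lborel (q k) = 0" for k
    unfolding q_def using integrable_lborel_compact_support[OF fc K f0]
    by (intro integral_difference_quotient_along_flow flow) measurable
  have "(\<lambda>k. integral\<^sup>L lborel (q k)) \<longlonglongrightarrow> integral\<^sup>L lborel g"
  proof (rule integral_dominated_convergence[where w="\<lambda>\<xi>. indicator K' \<xi> *\<^sub>R max C 0"])
    show "integrable lborel (\<lambda>\<xi>. indicator K' \<xi> *\<^sub>R max C 0)"
      by (rule borel_integrable_compact[OF \<open>compact K'\<close>]) auto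
    have "filterlim h (at 0) sequentially"
      using filterlim_inverse_Suc_at_0 by (simp add: h_def[abs_def])
    moreover have "((\<lambda>r. (f (\<xi> + r *\<^sub>R w \<xi>) - f \<xi>) / r) \<longlongrightarrow> g \<xi>) (at 0)" for \<xi>
      using der[of \<xi> 0] unfolding DERIV_def by simp
    ultimately show "AE \<xi> in lborel. (\<lambda>k. q k \<xi>) \<longlonglongrightarrow> g \<xi>"
      unfolding q_def by (intro AE_I2) (rule filterlim_compose)
    show "AE \<xi> in lborel. norm (q k \<xi>) \<le> indicator K' \<xi> *\<^sub>R max C 0" for k
      using difference_quotient_along_flow_bound[OF winv der g_bound f0 h(1)[of k] h(2)[of k]]
      by (simp add: q_def K'_def)
    show "q k \<in> borel_measurable lborel" for k
      unfolding q_def by measurable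
  qed simp
  with q0 show ?thesis by (simp add: LIMSEQ_const_iff)
qed

lemma has_real_derivative_hardy_quotient_along_flow:
  fixes u \<delta> :: "'a::real_normed_vector \<Rightarrow> real" and w :: "'a \<Rightarrow> 'a" and \<xi> :: 'a and r :: real
  assumes winv: "\<And>\<xi> r. w (\<xi> + r *\<^sub>R w \<xi>) = w \<xi>"
    and \<delta>_line: "\<And>\<xi> r. \<delta> (\<xi> + r *\<^sub>R w \<xi>) = \<delta> \<xi> + r"
    and hasD: "\<And>\<xi>. (u has_derivative D \<xi>) (at \<xi>)"
    and K: "closed K" and K_pos: "\<And>\<xi>. \<xi> \<in> K \<Longrightarrow> \<delta> \<xi> > 0" and u0: "\<And>\<xi>. \<xi> \<notin> K \<Longrightarrow> u \<xi> = 0"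
  defines "\<eta> \<equiv> \<xi> + r *\<^sub>R w \<xi>"
  shows "((\<lambda>s. (u (\<xi> + s *\<^sub>R w \<xi>))\<^sup>2 / \<delta> (\<xi> + s *\<^sub>R w \<xi>)) has_real_derivative
           2 * (u \<eta> / \<delta> \<eta>) * D \<eta> (w \<eta>) - (u \<eta> / \<delta> \<eta>)\<^sup>2) (at r)"
proof (cases "\<eta> \<in> K")
  case True
  then have pos: "\<delta> \<xi> + r > 0"
    using K_pos[OF True] by (simp add: \<eta>_def \<delta>_line)
  have "((\<lambda>s. \<xi> + s *\<^sub>R w \<xi>) has_derivative (\<lambda>h. h *\<^sub>R w \<xi>)) (at r)"
    by (auto intro!: derivative_eq_intros)
  from has_derivative_compose[OF this hasD[of \<eta>, unfolded \<eta>_def]]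
  have "((\<lambda>s. u (\<xi> + s *\<^sub>R w \<xi>)) has_derivative (\<lambda>h. D \<eta> (h *\<^sub>R w \<xi>))) (at r)"
    by (simp add: \<eta>_def)
  moreover have "(\<lambda>h. D \<eta> (h *\<^sub>R w \<xi>)) = (*) (D \<eta> (w \<eta>))"
    using linear_scale[OF has_derivative_linear[OF hasD[of \<eta>]]]
    by (auto simp: fun_eq_iff \<eta>_def winv)
  ultimately have du: "((\<lambda>s. u (\<xi> + s *\<^sub>R w \<xi>)) has_real_derivative D \<eta> (w \<eta>)) (at r)"
    by (simp add: has_field_derivative_def)
  have dsq: "((\<lambda>s. (u (\<xi> + s *\<^sub>R w \<xi>))\<^sup>2) has_real_derivative 2 * u \<eta> * D \<eta> (w \<eta>)) (at r)"
    using DERIV_mult[OF du du] by (simp add: power2_eq_square \<eta>_def algebra_simps)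
  have d\<delta>: "((\<lambda>s. \<delta> \<xi> + s) has_real_derivative 1) (at r)"
    by (auto intro!: derivative_eq_intros)
  have "((\<lambda>s. (u (\<xi> + s *\<^sub>R w \<xi>))\<^sup>2 / (\<delta> \<xi> + s)) has_real_derivative
      (2 * u \<eta> * D \<eta> (w \<eta>) * (\<delta> \<xi> + r) - 1 * (u \<eta>)\<^sup>2) / (\<delta> \<xi> + r) ^ Suc (Suc 0)) (at r)"
    using DERIV_quotient[OF dsq d\<delta>] pos by (simp add: \<eta>_def)
  moreover have "(2 * u \<eta> * D \<eta> (w \<eta>) * (\<delta> \<xi> + r) - 1 * (u \<eta>)\<^sup>2) / (\<delta> \<xi> + r) ^ Suc (Suc 0)
      = 2 * (u \<eta> / \<delta> \<eta>) * D \<eta> (w \<eta>) - (u \<eta> / \<delta> \<eta>)\<^sup>2"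
  proof -
    have "(2 * U * W * e - 1 * U\<^sup>2) / e ^ Suc (Suc 0) = 2 * (U / e) * W - (U / e)\<^sup>2"
      if "e \<noteq> 0" for U W e :: real
      using that by (simp add: field_simps power2_eq_square)
    moreover have "\<delta> \<eta> = \<delta> \<xi> + r"
      by (simp add: \<eta>_def \<delta>_line)
    ultimately show ?thesis
      using pos by simp
  qed
  ultimately show ?thesis by (simp add: \<delta>_line)
next
  case False
  have "open ((\<lambda>s. \<xi> + s *\<^sub>R w \<xi>) -` (-K))"
    by (intro open_vimage continuous_intros) (use K in auto)
  from has_field_derivative_transform_within_open[OF DERIV_const[of 0 "at r"] this]
  show ?thesis
    using False u0 by (auto simp: \<eta>_def)
qed

lemma mult_le_sq_div_4_add_sq:
  fixes x y :: real
  shows "x * y \<le> x\<^sup>2 / 4 + y\<^sup>2"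
proof -
  have "x\<^sup>2 / 4 + y\<^sup>2 - x * y = (x / 2 - y)\<^sup>2"
    by (simp add: power2_eq_square field_simps)
  then show ?thesis
    using zero_le_power2[of "x / 2 - y"] by linarith
qed

context
  fixes u \<delta> :: "'a::euclidean_space \<Rightarrow> real" and w :: "'a \<Rightarrow> 'a" and D :: "'a \<Rightarrow> 'a \<Rightarrow> real"
    and K :: "'a set"
  assumes flow: "\<And>s. distr lborel borel (\<lambda>\<xi>. \<xi> + s *\<^sub>R w \<xi>) = lborel"
    and wc: "continuous_on UNIV w"
    and winv: "\<And>\<xi> r. w (\<xi> + r *\<^sub>R w \<xi>) = w \<xi>"
    and \<delta>c: "continuous_on UNIV \<delta>"
    and \<delta>_line: "\<And>\<xi> r. \<delta> (\<xi> + r *\<^sub>R w \<xi>) = \<delta> \<xi> + r"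
    and hasD: "\<And>\<xi>. (u has_derivative D \<xi>) (at \<xi>)"
    and Vc: "continuous_on UNIV (\<lambda>\<xi>. D \<xi> (w \<xi>))"
    and K: "compact K" and K_pos: "\<And>\<xi>. \<xi> \<in> K \<Longrightarrow> \<delta> \<xi> > 0" and u0: "\<And>\<xi>. \<xi> \<notin> K \<Longrightarrow> u \<xi> = 0"
begin

lemma hardy_identity_along_flow:
  shows "integrable lborel (\<lambda>\<xi>. (u \<xi> / \<delta> \<xi>)\<^sup>2)"
    and "integrable lborel (\<lambda>\<xi>. u \<xi> / \<delta> \<xi> * D \<xi> (w \<xi>))"
    and "(\<integral>\<xi>. (u \<xi> / \<delta> \<xi>)\<^sup>2 \<partial>lborel) = 2 * (\<integral>\<xi>. u \<xi> / \<delta> \<xi> * D \<xi> (w \<xi>) \<partial>lborel)"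
proof -
  define p where "p \<xi> = (u \<xi> / \<delta> \<xi>)\<^sup>2" for \<xi>
  define m where "m \<xi> = u \<xi> / \<delta> \<xi> * D \<xi> (w \<xi>)" for \<xi>
  have "closed K"
    using K by (rule compact_imp_closed)
  have "continuous_on UNIV u"
    by (metis continuous_at_imp_continuous_on has_derivative_continuous hasD)
  then have on_H: "continuous_on {\<xi>. \<delta> \<xi> > 0} u" "continuous_on {\<xi>. \<delta> \<xi> > 0} \<delta>"
    "continuous_on {\<xi>. \<delta> \<xi> > 0} (\<lambda>\<xi>. D \<xi> (w \<xi>))"
    using \<delta>c Vc by (auto intro: continuous_on_subset)
  have H_open: "open {\<xi>. \<delta> \<xi> > 0}"
    by (rule open_Collect_less[OF continuous_on_const \<delta>c])
  have K_sub: "K \<subseteq> {\<xi>. \<delta> \<xi> > 0}"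
    using K_pos by auto
  note vanishing_outside = continuous_on_vanishing_outside[OF H_open K_sub \<open>closed K\<close>]
  have fc: "continuous_on UNIV (\<lambda>\<xi>. (u \<xi>)\<^sup>2 / \<delta> \<xi>)"
    and pc: "continuous_on UNIV p" and mc: "continuous_on UNIV m"
    unfolding p_def m_def by (auto intro!: vanishing_outside continuous_intros on_H simp: u0)
  have ip: "integrable lborel p" and im: "integrable lborel m"
    using integrable_lborel_compact_support[OF pc K] integrable_lborel_compact_support[OF mc K]
    by (simp_all add: p_def m_def u0)
  then show "integrable lborel (\<lambda>\<xi>. (u \<xi> / \<delta> \<xi>)\<^sup>2)"
    and "integrable lborel (\<lambda>\<xi>. u \<xi> / \<delta> \<xi> * D \<xi> (w \<xi>))"
    by (simp_all add: p_def[abs_def] m_def[abs_def])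
  have der: "((\<lambda>r. (u (\<xi> + r *\<^sub>R w \<xi>))\<^sup>2 / \<delta> (\<xi> + r *\<^sub>R w \<xi>)) has_real_derivative
      2 * m (\<xi> + r *\<^sub>R w \<xi>) - p (\<xi> + r *\<^sub>R w \<xi>)) (at r)" for \<xi> r
    using has_real_derivative_hardy_quotient_along_flow[OF winv \<delta>_line hasD \<open>closed K\<close> K_pos u0, of \<xi> r]
    by (simp add: m_def p_def mult.assoc)
  have gc: "continuous_on UNIV (\<lambda>\<xi>. 2 * m \<xi> - p \<xi>)"
    by (intro continuous_intros mc pc)
  have "integral\<^sup>L lborel (\<lambda>\<xi>. 2 * m \<xi> - p \<xi>) = 0"
    by (rule integral_derivative_along_flow_eq_0[OF flow wc winv fc gc K _ _ der])
      (simp_all add: m_def p_def u0)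
  with ip im have "integral\<^sup>L lborel p = 2 * integral\<^sup>L lborel m"
    by simp
  then show "(\<integral>\<xi>. (u \<xi> / \<delta> \<xi>)\<^sup>2 \<partial>lborel) = 2 * (\<integral>\<xi>. u \<xi> / \<delta> \<xi> * D \<xi> (w \<xi>) \<partial>lborel)"
    unfolding p_def[abs_def] m_def[abs_def] .
qed

lemma hardy_inequality_along_flow:
  "(\<integral>\<xi>. (u \<xi> / \<delta> \<xi>)\<^sup>2 \<partial>lborel) \<le> 4 * (\<integral>\<xi>. (D \<xi> (w \<xi>))\<^sup>2 \<partial>lborel)"
proof -
  have "integrable lborel (\<lambda>\<xi>. (D \<xi> (w \<xi>))\<^sup>2)"
    using has_derivative_vanishing_outside[OF compact_imp_closed[OF K] u0 hasD]
    by (intro integrable_lborel_compact_support[OF _ K] continuous_intros Vc) simp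
  note integrable = hardy_identity_along_flow(1,2) this
  have "(\<integral>\<xi>. (u \<xi> / \<delta> \<xi>)\<^sup>2 \<partial>lborel) = 2 * (\<integral>\<xi>. u \<xi> / \<delta> \<xi> * D \<xi> (w \<xi>) \<partial>lborel)"
    by (rule hardy_identity_along_flow(3))
  also have "\<dots> \<le> 2 * (\<integral>\<xi>. (u \<xi> / \<delta> \<xi>)\<^sup>2 / 4 + (D \<xi> (w \<xi>))\<^sup>2 \<partial>lborel)"
  proof -
    have "(\<integral>\<xi>. u \<xi> / \<delta> \<xi> * D \<xi> (w \<xi>) \<partial>lborel)
        \<le> (\<integral>\<xi>. (u \<xi> / \<delta> \<xi>)\<^sup>2 / 4 + (D \<xi> (w \<xi>))\<^sup>2 \<partial>lborel)"
    proof (rule integral_mono)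
      show "u \<xi> / \<delta> \<xi> * D \<xi> (w \<xi>) \<le> (u \<xi> / \<delta> \<xi>)\<^sup>2 / 4 + (D \<xi> (w \<xi>))\<^sup>2" for \<xi>
        by (rule mult_le_sq_div_4_add_sq)
    qed (use integrable in auto)
    then show ?thesis
      by simp
  qed
  also have "\<dots> = (\<integral>\<xi>. (u \<xi> / \<delta> \<xi>)\<^sup>2 \<partial>lborel) / 2 + 2 * (\<integral>\<xi>. (D \<xi> (w \<xi>))\<^sup>2 \<partial>lborel)"
    using integrable by simp
  finally show ?thesis
    by linarith
qed

end

section \<open>The horizontal flow on the Heisenberg group\<close>

text \<open>The vector field \<open>\<Sum>\<^sub>i a\<^sub>i X\<^sub>i + b\<^sub>i Y\<^sub>i\<close> as a vector of Euclidean coefficients: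
  at \<open>(x, y, t)\<close> it is \<open>a \<bullet> \<partial>\<^sub>x + b \<bullet> \<partial>\<^sub>y + 2 (a \<bullet> y - b \<bullet> x) \<partial>\<^sub>t\<close>.\<close>
definition horizontal_field :: "real^'n \<Rightarrow> real^'n \<Rightarrow> 'n::finite heis \<Rightarrow> 'n heis" where
  "horizontal_field a b \<xi> = (a, b, 2 * (a \<bullet> fst (snd \<xi>) - b \<bullet> fst \<xi>))"

lemma horizontal_field_along_line:
  "horizontal_field a b (\<xi> + r *\<^sub>R horizontal_field a b \<xi>) = horizontal_field a b \<xi>"
  by (simp add: horizontal_field_def inner_commute[of b a] algebra_simps)

lemma continuous_on_horizontal_field: "continuous_on UNIV (horizontal_field a b)"
  unfolding horizontal_field_def by (intro continuous_intros)

lemma lborel_distr_horizontal_flow: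
  "distr lborel borel (\<lambda>\<xi>. \<xi> + s *\<^sub>R horizontal_field a b \<xi>) = lborel"
proof -
  define S :: "'a heis \<Rightarrow> 'a heis" where
    "S = (\<lambda>p. (fst p, (\<lambda>x q. (fst q, snd q + 2 * s * (a \<bullet> fst q - b \<bullet> x))) (fst p) (snd p)))"
  have "distr lborel borel S = lborel"
    unfolding S_def
  proof (rule lborel_distr_fibrewise)
    show "(\<lambda>p. (fst p, (\<lambda>x q. (fst q, snd q + 2 * s * (a \<bullet> fst q - b \<bullet> x))) (fst p) (snd p)))
        \<in> borel_measurable borel"
      by (intro borel_measurable_continuous_onI continuous_intros)
    fix x :: "real^'a"
    have "continuous_on UNIV (\<lambda>y::real^'a. 2 * s * (a \<bullet> y - b \<bullet> x))"
      by (intro continuous_intros)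
    from lborel_distr_shear[OF this]
    show "distr lborel borel ((\<lambda>x q. (fst q, snd q + 2 * s * (a \<bullet> fst q - b \<bullet> x))) x) = lborel"
      by simp
  qed
  moreover have "(\<lambda>\<xi>. \<xi> + s *\<^sub>R horizontal_field a b \<xi>) = (+) (s *\<^sub>R a, s *\<^sub>R b, 0) \<circ> S"
    by (auto simp: fun_eq_iff S_def horizontal_field_def algebra_simps)
  moreover have "S \<in> borel_measurable borel"
    unfolding S_def by (intro borel_measurable_continuous_onI continuous_intros)
  moreover have "(+) (s *\<^sub>R a, s *\<^sub>R b, 0::real) \<in> borel_measurable borel"
    by (intro borel_measurable_continuous_onI continuous_intros)
  ultimately show ?thesis
    using distr_distr[of "(+) (s *\<^sub>R a, s *\<^sub>R b, 0::real)" borel borel S lborel]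
    by (simp add: lborel_distr_plus)
qed

lemma linear_sum_axis:
  fixes L :: "real^'n \<Rightarrow> real"
  assumes "linear L"
  shows "L a = (\<Sum>i\<in>UNIV. a $ i * L (axis i 1))"
proof -
  have "L a = L (\<Sum>i\<in>UNIV. a $ i *\<^sub>R axis i 1)"
    using basis_expansion[of a] by (simp add: scalar_mult_eq_scaleR)
  also have "\<dots> = (\<Sum>i\<in>UNIV. a $ i * L (axis i 1))"
    using assms by (simp add: linear_sum linear_scale)
  finally show ?thesis .
qed

lemma linear_horizontal_field:
  assumes "linear L"
  shows "L (horizontal_field a b \<xi>)
    = L (a, 0, 0) + L (0, b, 0) + 2 * (a \<bullet> fst (snd \<xi>) - b \<bullet> fst \<xi>) * L (0, 0, 1)"
proof -
  have "horizontal_field a b \<xi>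
      = (a, 0, 0) + (0, b, 0) + (2 * (a \<bullet> fst (snd \<xi>) - b \<bullet> fst \<xi>)) *\<^sub>R (0, 0, 1)"
    by (simp add: horizontal_field_def)
  then show ?thesis
    by (simp only: linear_add[OF assms] linear_scale[OF assms] real_scaleR_def)
qed

lemma horizontal_derivative_sq_le_heis_grad_sq:
  fixes u :: "'n::finite heis \<Rightarrow> real"
  assumes lin: "linear (frechet_derivative u (at \<xi>))" and ab: "a \<bullet> a + b \<bullet> b = 1"
  shows "(frechet_derivative u (at \<xi>) (horizontal_field a b \<xi>))\<^sup>2 \<le> heis_grad_sq u \<xi>"
proof -
  obtain x y t where \<xi>: "\<xi> = (x, y, t)"
    by (cases \<xi>)
  define L where "L = frechet_derivative u (at \<xi>)"
  define X where "X i = L (axis i 1, 0, 0) + 2 * (y $ i) * L (0, 0, 1)" for i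
  define Y where "Y i = L (0, axis i 1, 0) - 2 * (x $ i) * L (0, 0, 1)" for i
  have l1: "linear (\<lambda>v. L (v, 0, 0))" and l2: "linear (\<lambda>v. L (0, v, 0))"
    using linear_compose[OF _ lin[folded L_def], of "\<lambda>v. (v, 0, 0)"]
      linear_compose[OF _ lin[folded L_def], of "\<lambda>v. (0, v, 0)"]
    by (simp_all add: o_def linear_iff)
  have "L (horizontal_field a b \<xi>) = (\<Sum>i\<in>UNIV. a $ i * X i) + (\<Sum>i\<in>UNIV. b $ i * Y i)"
    unfolding linear_horizontal_field[OF lin[folded L_def]] linear_sum_axis[OF l1, of a]
      linear_sum_axis[OF l2, of b] X_def Y_def
    by (simp add: \<xi> inner_vec_def algebra_simps sum.distrib sum_distrib_left sum_distrib_right sum_subtractf)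
  also have "\<dots> = (a, b) \<bullet> ((\<chi> i. X i), (\<chi> i. Y i))"
    by (simp add: inner_vec_def)
  finally have "(L (horizontal_field a b \<xi>))\<^sup>2
      \<le> ((a, b) \<bullet> (a, b)) * (((\<chi> i. X i), (\<chi> i. Y i)) \<bullet> ((\<chi> i. X i), (\<chi> i. Y i)))"
    using Cauchy_Schwarz_ineq by metis
  also have "\<dots> = heis_grad_sq u \<xi>"
    using ab by (simp add: \<xi> L_def X_def Y_def heis_grad_sq_def heisX_def heisY_def inner_vec_def
        power2_eq_square sum.distrib)
  finally show ?thesis
    by (simp add: L_def)
qed

lemma heis_grad_sq_expand:
  "heis_grad_sq u \<xi> = (\<Sum>i\<in>UNIV.
      (frechet_derivative u (at \<xi>) (axis i 1, 0, 0)
        + 2 * (fst (snd \<xi>) $ i) * frechet_derivative u (at \<xi>) (0, 0, 1))\<^sup>2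
    + (frechet_derivative u (at \<xi>) (0, axis i 1, 0)
        - 2 * (fst \<xi> $ i) * frechet_derivative u (at \<xi>) (0, 0, 1))\<^sup>2)"
  by (cases \<xi>) (simp add: heis_grad_sq_def heisX_def heisY_def)

lemma C0_infty_has_derivative:
  assumes "u \<in> C0_infty U"
  shows "(u has_derivative frechet_derivative u (at \<xi>)) (at \<xi>)"
    and "continuous_on UNIV (\<lambda>\<xi>. frechet_derivative u (at \<xi>) v)"
proof -
  have "smooth_on UNIV u"
    using assms by (simp add: C0_infty_def)
  then have "u differentiable_on UNIV"
    and "smooth_on UNIV (\<lambda>\<xi>. frechet_derivative u (at \<xi>) v)"
    by (auto elim: smooth_on.cases)
  then show "(u has_derivative frechet_derivative u (at \<xi>)) (at \<xi>)"
    and "continuous_on UNIV (\<lambda>\<xi>. frechet_derivative u (at \<xi>) v)"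
    by (auto elim!: smooth_on.cases intro: differentiable_imp_continuous_on frechet_derivative_works[THEN iffD1]
        simp: differentiable_on_def)
qed

lemma C0_infty_compact_support:
  assumes "u \<in> C0_infty U"
  obtains K where "compact K" "K \<subseteq> U" "\<And>\<xi>. \<xi> \<notin> K \<Longrightarrow> u \<xi> = 0"
    "\<And>\<xi>. \<xi> \<notin> K \<Longrightarrow> frechet_derivative u (at \<xi>) = (\<lambda>_. 0)"
proof -
  let ?K = "closure {\<xi>. u \<xi> \<noteq> 0}"
  have u0: "u \<xi> = 0" if "\<xi> \<notin> ?K" for \<xi>
    using that closure_subset[of "{\<xi>. u \<xi> \<noteq> 0}"] by auto
  have "frechet_derivative u (at \<xi>) = (\<lambda>_. 0)" if "\<xi> \<notin> ?K" for \<xi>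
    by (rule has_derivative_vanishing_outside[OF closed_closure u0 C0_infty_has_derivative(1)[OF assms] that])
  moreover have "compact ?K" "?K \<subseteq> U"
    using assms by (simp_all add: C0_infty_def)
  ultimately show ?thesis
    using that u0 by blast
qed

lemma integral_horizontal_derivative_le_heis_grad_sq:
  fixes u :: "'n::finite heis \<Rightarrow> real"
  assumes u: "u \<in> C0_infty U" and ab: "a \<bullet> a + b \<bullet> b = 1"
  shows "(\<integral>\<xi>. (frechet_derivative u (at \<xi>) (horizontal_field a b \<xi>))\<^sup>2 \<partial>lborel)
    \<le> (\<integral>\<xi>. heis_grad_sq u \<xi> \<partial>lborel)"
proof (rule integral_mono)
  obtain K where K: "compact K" and D0: "\<And>\<xi>. \<xi> \<notin> K \<Longrightarrow> frechet_derivative u (at \<xi>) = (\<lambda>_. 0)"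
    using C0_infty_compact_support[OF u] by metis
  note linD = has_derivative_linear[OF C0_infty_has_derivative(1)[OF u]]
  note Dc = C0_infty_has_derivative(2)[OF u]
  have "continuous_on UNIV (\<lambda>\<xi>. (frechet_derivative u (at \<xi>) (horizontal_field a b \<xi>))\<^sup>2)"
    unfolding linear_horizontal_field[OF linD] by (intro continuous_intros Dc)
  then show "integrable lborel (\<lambda>\<xi>. (frechet_derivative u (at \<xi>) (horizontal_field a b \<xi>))\<^sup>2)"
    by (rule integrable_lborel_compact_support[OF _ K]) (simp add: D0)
  have "continuous_on UNIV (heis_grad_sq u)"
    unfolding heis_grad_sq_expand[abs_def] by (intro continuous_intros Dc)
  then show "integrable lborel (heis_grad_sq u)"
    by (rule integrable_lborel_compact_support[OF _ K]) (simp add: heis_grad_sq_expand D0)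
  show "(frechet_derivative u (at \<xi>) (horizontal_field a b \<xi>))\<^sup>2 \<le> heis_grad_sq u \<xi>" for \<xi>
    by (rule horizontal_derivative_sq_le_heis_grad_sq[OF linD ab])
qed

lemma hardy_inequality_heis_halfspace:
  fixes \<nu> :: "'n::finite heis" and u :: "'n heis \<Rightarrow> real"
  assumes "norm \<nu> = 1" and "snd (snd \<nu>) = 0" and u: "u \<in> C0_infty (halfspace_plus \<nu> d)"
  shows "(\<integral>\<xi>. (u \<xi> / (\<xi> \<bullet> \<nu> - d))\<^sup>2 \<partial>lborel) \<le> 4 * (\<integral>\<xi>. heis_grad_sq u \<xi> \<partial>lborel)"
proof -
  obtain a b where \<nu>: "\<nu> = (a, b, 0)"
    using assms(2) by (metis prod.collapse)
  have ab: "a \<bullet> a + b \<bullet> b = 1"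
    using assms(1) power2_norm_eq_inner[of \<nu>] by (simp add: \<nu>)
  obtain K where K: "compact K" "K \<subseteq> halfspace_plus \<nu> d" and u0: "\<And>\<xi>. \<xi> \<notin> K \<Longrightarrow> u \<xi> = 0"
    using C0_infty_compact_support[OF u] by metis
  note hasD = C0_infty_has_derivative(1)[OF u]
  have Vc: "continuous_on UNIV (\<lambda>\<xi>. frechet_derivative u (at \<xi>) (horizontal_field a b \<xi>))"
    unfolding linear_horizontal_field[OF has_derivative_linear[OF hasD]]
    by (intro continuous_intros C0_infty_has_derivative(2)[OF u])
  have \<delta>c: "continuous_on UNIV (\<lambda>\<xi>. \<xi> \<bullet> \<nu> - d)"
    by (intro continuous_intros)
  have \<delta>_line: "(\<xi> + r *\<^sub>R horizontal_field a b \<xi>) \<bullet> \<nu> - d = \<xi> \<bullet> \<nu> - d + r" for \<xi> r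
    using ab by (simp add: \<nu> horizontal_field_def inner_add_left flip: distrib_left)
  have K_pos: "\<xi> \<bullet> \<nu> - d > 0" if "\<xi> \<in> K" for \<xi>
    using that K(2) by (auto simp: halfspace_plus_def)
  have "(\<integral>\<xi>. (u \<xi> / (\<xi> \<bullet> \<nu> - d))\<^sup>2 \<partial>lborel)
      \<le> 4 * (\<integral>\<xi>. (frechet_derivative u (at \<xi>) (horizontal_field a b \<xi>))\<^sup>2 \<partial>lborel)"
    by (rule hardy_inequality_along_flow[OF lborel_distr_horizontal_flow continuous_on_horizontal_field
      horizontal_field_along_line \<delta>c \<delta>_line hasD Vc K(1) K_pos u0])
  also have "\<dots> \<le> 4 * (\<integral>\<xi>. heis_grad_sq u \<xi> \<partial>lborel)"
    using integral_horizontal_derivative_le_heis_grad_sq[OF u ab] by simp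
  finally show ?thesis .
qed

lemma infdist_frontier_halfspace_plus:
  assumes "norm \<nu> = 1"
  shows "infdist \<xi> (frontier (halfspace_plus \<nu> d)) = \<bar>\<xi> \<bullet> \<nu> - d\<bar>"
proof -
  have "\<nu> \<noteq> 0"
    using assms by auto
  then have "frontier (halfspace_plus \<nu> d) = {x. \<nu> \<bullet> x = d}"
    using frontier_halfspace_gt[of \<nu> d] by (simp add: halfspace_plus_def inner_commute[of _ \<nu>])
  with infdist_hyperplane[OF assms] show ?thesis by simp
qed

theorem mainTheorem3:
  fixes \<nu> :: "'n::finite heis" and d :: real and u :: "'n heis \<Rightarrow> real"
  assumes "norm \<nu> = 1"
    and "snd (snd \<nu>) = 0"
    and "u \<in> C0_infty (halfspace_plus \<nu> d)"
  shows "(LINT \<xi>:halfspace_plus \<nu> d|lborel. heis_grad_sq u \<xi>)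
         \<ge> 1/4 * (LINT \<xi>:halfspace_plus \<nu> d|lborel.
                  \<bar>u \<xi>\<bar>\<^sup>2 / (infdist \<xi> (frontier (halfspace_plus \<nu> d)))\<^sup>2)"
proof -
  obtain K where K: "K \<subseteq> halfspace_plus \<nu> d" and u0: "\<And>\<xi>. \<xi> \<notin> K \<Longrightarrow> u \<xi> = 0"
    and D0: "\<And>\<xi>. \<xi> \<notin> K \<Longrightarrow> frechet_derivative u (at \<xi>) = (\<lambda>_. 0)"
    using C0_infty_compact_support[OF assms(3)] by metis
  have distance: "(LINT \<xi>:halfspace_plus \<nu> d|lborel. \<bar>u \<xi>\<bar>\<^sup>2 / (infdist \<xi> (frontier (halfspace_plus \<nu> d)))\<^sup>2)
      = (\<integral>\<xi>. (u \<xi> / (\<xi> \<bullet> \<nu> - d))\<^sup>2 \<partial>lborel)"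
    using K u0 by (intro set_lebesgue_integral_eq_integral)
      (auto simp: infdist_frontier_halfspace_plus[OF assms(1)] power_divide)
  have gradient: "(LINT \<xi>:halfspace_plus \<nu> d|lborel. heis_grad_sq u \<xi>) = (\<integral>\<xi>. heis_grad_sq u \<xi> \<partial>lborel)"
  proof (rule set_lebesgue_integral_eq_integral)
    fix \<xi> assume "\<xi> \<notin> halfspace_plus \<nu> d"
    with K have "\<xi> \<notin> K" by auto
    then show "heis_grad_sq u \<xi> = 0" by (simp add: heis_grad_sq_expand D0)
  qed simp
  show ?thesis
    unfolding distance gradient using hardy_inequality_heis_halfspace[OF assms] by linarith
qed

end
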